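(* Assume the KLS conjecture (stated in the context) holds. Let $(k_n)_{n\in\mathbb N}$ be a sequence of integers with $1\le k_n\le n$ and $k_n\to\infty$, and let $(\xi_n)_{n\in\mathbb N}$ be a sequence of random vectors such that each $\xi_n$ is an isotropic log-concave random vector in $\mathbb R^{k_n}$. Put $X_n:=\|\xi_n\|_2/\sqrt{k_n}$ and suppose that $(X_n)_{n\in\mathbb N}$ satisfies a large deviation principle on $\mathbb R$ with speed $(s_n)_{n\in\mathbb N}$ and rate function $\mathbb I$. Then neither of the following two conditions can hold: (a) $s_n/\sqrt{k_n}\to 0$ as $n\to\infty$ and $\mathbb I\neq \mathbb I_0$, where $\mathbb I_0(1)=0$ and $\mathbb I_0(x)=\infty$ for $x\neq 1$; (b) there are absolute constants $0<c\le C<\infty$ with $c\sqrt{k_n}\le s_n\le C\sqrt{k_n}$ for all $n$, and there is a constant $t_0\in(1,\infty)$ such that \[ \inf_{t>t_0}\frac{\inf_{x\in(t,\infty)}\mathbb I(x)}{t}=0 . \] In other words, the existence of such a sequence satisfying (a) or (b) would disprove the KLS conjecture.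
   Context: A random vector $\xi$ in $\mathbb R^k$ is isotropic if $\mathbb E\xi=0$ and $\mathbb E[\xi\xi^T]=\mathrm{Id}_k$; it is log-concave if its distribution has a log-concave density (or, more generally, is a log-concave measure). Large deviation principle: for a sequence $s_n\uparrow\infty$ of positive reals and a lower semicontinuous function $\mathbb I:\mathbb R\to[0,\infty]$ not identically $\infty$, a sequence of real random variables $(X_n)$ satisfies an LDP with speed $s_n$ and rate function $\mathbb I$ if for every Borel set $A\subset\mathbb R$, $-\inf_{x\in A^\circ}\mathbb I(x)\le\liminf_{n}\frac1{s_n}\log\mathbb P[X_n\in A]\le\limsup_n\frac1{s_n}\log\mathbb P[X_n\in A]\le-\inf_{x\in\overline A}\mathbb I(x)$. KLS conjecture: there exists an absolute constant $C\in(0,\infty)$ such that for every $d\in\mathbb N$, every centered random vector $X$ in $\mathbb R^d$ with log-concave distribution, and every locally Lipschitz $f:\mathbb R^d\to\mathbb R$ with $f(X)$ of finite variance, $\mathrm{Var}[f(X)]\le C\lambda_X^2\,\mathbb E\|\nabla f(X)\|_2^2$, where $\lambda_X^2:=\sup_{\theta\in S^{d-1}}\mathbb E\langle X,\theta\rangle^2$. (Known consequence used: the KLS conjecture implies an absolute constant $C>0$ such that for every isotropic log-concave $\xi$ in $\mathbb R^k$ and all $t>0$, $\mathbb P[|\|\xi\|_2/\sqrt k-1|>t]\le 2e^{-Ct\sqrt k}$.) *)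

theory Defs
  imports "HOL-Probability.Probability"
begin

text \<open>The space R^d is represented by explicit carriers: vectors are
  functions of type nat => real that are extensional on the index set {..<d}
  (i.e. elements of PiE {..<d} (%_. UNIV)), with Borel sigma-algebra given by the
  product measurable space below. The natural numbers of the paper are {1,2,...}.\<close>

definition Rsp :: "nat \<Rightarrow> (nat \<Rightarrow> real) measure" where
  "Rsp d = PiM {..<d} (\<lambda>_. borel)"

definition vnorm :: "nat \<Rightarrow> (nat \<Rightarrow> real) \<Rightarrow> real" where
  "vnorm d x = sqrt (\<Sum>i<d. (x i)\<^sup>2)"

definition vinner :: "nat \<Rightarrow> (nat \<Rightarrow> real) \<Rightarrow> (nat \<Rightarrow> real) \<Rightarrow> real" where
  "vinner d x y = (\<Sum>i<d. x i * y i)"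

definition vsphere :: "nat \<Rightarrow> (nat \<Rightarrow> real) set" where
  "vsphere d = {\<theta> \<in> space (Rsp d). vnorm d \<theta> = 1}"

definition log_concave_measure :: "nat \<Rightarrow> (nat \<Rightarrow> real) measure \<Rightarrow> bool" where
  "log_concave_measure d \<mu> \<longleftrightarrow>
     prob_space \<mu> \<and> sets \<mu> = sets (Rsp d) \<and>
     (\<forall>K L l. K \<subseteq> space (Rsp d) \<and> L \<subseteq> space (Rsp d) \<and> K \<noteq> {} \<and> L \<noteq> {} \<and>
        compact K \<and> compact L \<and> 0 < l \<and> l < 1 \<longrightarrow>
        measure \<mu> {restrict (\<lambda>i. l * x i + (1 - l) * y i) {..<d} | x y. x \<in> K \<and> y \<in> L}
          \<ge> measure \<mu> K powr l * measure \<mu> L powr (1 - l))"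

definition centered :: "nat \<Rightarrow> (nat \<Rightarrow> real) measure \<Rightarrow> bool" where
  "centered d \<mu> \<longleftrightarrow> (\<forall>i<d. integrable \<mu> (\<lambda>x. x i) \<and> (\<integral>x. x i \<partial>\<mu>) = 0)"

definition isotropic :: "nat \<Rightarrow> (nat \<Rightarrow> real) measure \<Rightarrow> bool" where
  "isotropic d \<mu> \<longleftrightarrow> centered d \<mu> \<and>
     (\<forall>i<d. \<forall>j<d. integrable \<mu> (\<lambda>x. x i * x j) \<and>
        (\<integral>x. x i * x j \<partial>\<mu>) = (if i = j then 1 else 0))"

definition locally_lipschitz :: "nat \<Rightarrow> ((nat \<Rightarrow> real) \<Rightarrow> real) \<Rightarrow> bool" where
  "locally_lipschitz d f \<longleftrightarrow>
     (\<forall>x\<in>space (Rsp d). \<exists>r>0. \<exists>L. \<forall>y\<in>space (Rsp d). \<forall>z\<in>space (Rsp d).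
        vnorm d (\<lambda>i. y i - x i) < r \<and> vnorm d (\<lambda>i. z i - x i) < r \<longrightarrow>
        \<bar>f y - f z\<bar> \<le> L * vnorm d (\<lambda>i. y i - z i))"

text \<open>Length of the gradient of a locally Lipschitz f at x, in the standard sense
  |grad f|(x) = limsup_{y -> x} |f y - f x| / |y - x| (this equals the Euclidean norm
  of the gradient at every point where f is differentiable).\<close>
definition grad_norm :: "nat \<Rightarrow> ((nat \<Rightarrow> real) \<Rightarrow> real) \<Rightarrow> (nat \<Rightarrow> real) \<Rightarrow> real" where
  "grad_norm d f x = real_of_ereal
     (Limsup (at x within space (Rsp d))
        (\<lambda>y. ereal (\<bar>f y - f x\<bar> / vnorm d (\<lambda>i. y i - x i))))"

text \<open>The KLS conjecture, as stated in the paper (with X given by its distribution mu).\<close>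
definition KLS_conjecture :: bool where
  "KLS_conjecture \<longleftrightarrow>
     (\<exists>C::real. 0 < C \<and>
        (\<forall>(d::nat) (\<mu>::(nat \<Rightarrow> real) measure) (f::(nat \<Rightarrow> real) \<Rightarrow> real).
           log_concave_measure d \<mu> \<and> centered d \<mu> \<and> locally_lipschitz d f \<and>
           integrable \<mu> (\<lambda>x. (f x)\<^sup>2) \<longrightarrow>
           ennreal (\<integral>x. (f x - (\<integral>y. f y \<partial>\<mu>))\<^sup>2 \<partial>\<mu>)
             \<le> ennreal C * (SUP \<theta>\<in>vsphere d. \<integral>\<^sup>+x. ennreal ((vinner d x \<theta>)\<^sup>2) \<partial>\<mu>)
                 * (\<integral>\<^sup>+x. ennreal ((grad_norm d f x)\<^sup>2) \<partial>\<mu>)))"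

definition elog :: "real \<Rightarrow> ereal" where
  "elog p = (if p = 0 then -\<infinity> else ereal (ln p))"

definition LDP :: "(nat \<Rightarrow> 'a measure) \<Rightarrow> (nat \<Rightarrow> 'a \<Rightarrow> real) \<Rightarrow> (nat \<Rightarrow> real)
                    \<Rightarrow> (real \<Rightarrow> ereal) \<Rightarrow> bool" where
  "LDP \<Omega> X s I \<longleftrightarrow>
     (\<forall>n\<ge>1. 0 < s n) \<and> (\<forall>n m. 1 \<le> n \<and> n \<le> m \<longrightarrow> s n \<le> s m) \<and>
     filterlim s at_top sequentially \<and>
     (\<forall>x. 0 \<le> I x) \<and> (\<forall>a. closed {x. I x \<le> a}) \<and> (\<exists>x. I x \<noteq> \<infinity>) \<and>
     (\<forall>A \<in> sets borel.
        - (INF x\<in>interior A. I x)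
          \<le> liminf (\<lambda>n. ereal (1 / s n) * elog (measure (\<Omega> n) {\<omega>\<in>space (\<Omega> n). X n \<omega> \<in> A})) \<and>
        limsup (\<lambda>n. ereal (1 / s n) * elog (measure (\<Omega> n) {\<omega>\<in>space (\<Omega> n). X n \<omega> \<in> A}))
          \<le> - (INF x\<in>closure A. I x))"

end

(*
  Under the KLS conjecture every isotropic log-concave measure satisfies a Poincare inequality
  with a dimension-free constant C.  Applied to ramp functions of a 1-Lipschitz function phi it
  gives P(phi <= t) P(phi >= t + h) <= (C / h^2) P(phi >= t), so beyond the median the tails of phi
  halve over every step of length 2 sqrt C.  For phi = |x|, whose mean lies within sqrt C of
  sqrt k, this is the thin-shell estimate P(| |xi| / sqrt k - 1 | >= a) <= 16 exp (- c a sqrt k).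
  The LDP lower bound on open sets away from 1 then forces I >= c a sqrt (k n) / s n there:
  if s n = o(sqrt (k n)) the rate is infinite off 1, hence equal to I_0, and if
  s n <= C' sqrt (k n) then inf {I x | x > t} >= c (t - 1) / C' grows linearly in t.
*)

theory Submission
  imports Defs
begin

section \<open>Lipschitz functions on R^d\<close>

lemma vnorm_nonneg: "0 \<le> vnorm d x"
  by (simp add: vnorm_def sum_nonneg)

lemma vnorm_diff_le: "\<bar>vnorm d y - vnorm d z\<bar> \<le> vnorm d (\<lambda>i. y i - z i)"
proof -
  have "vnorm d y \<le> vnorm d (\<lambda>i. y i - z i) + vnorm d z"
    using L2_set_triangle_ineq[of "\<lambda>i. y i - z i" z "{..<d}"] by (simp add: vnorm_def L2_set_def)
  moreover have "vnorm d z \<le> vnorm d (\<lambda>i. y i - z i) + vnorm d y"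
    using L2_set_triangle_ineq[of "\<lambda>i. z i - y i" y "{..<d}"]
    by (simp add: vnorm_def L2_set_def power2_commute)
  ultimately show ?thesis by linarith
qed

lemma tendsto_vnorm_diff: "((\<lambda>y. vnorm d (\<lambda>i. y i - x i)) \<longlongrightarrow> 0) (at x within S)"
proof -
  have "continuous_on UNIV (\<lambda>y::nat\<Rightarrow>real. vnorm d (\<lambda>i. y i - x i))"
    unfolding vnorm_def
    by (intro continuous_intros continuous_on_product_then_coordinatewise continuous_on_id)
  then have "((\<lambda>y. vnorm d (\<lambda>i. y i - x i)) \<longlongrightarrow> vnorm d (\<lambda>i. x i - x i)) (at x within S)"
    by (meson UNIV_I continuous_on_def tendsto_within_subset top_greatest)
  then show ?thesis by (simp add: vnorm_def)
qed

lemma borel_measurable_vnorm[measurable]: "vnorm d \<in> borel_measurable (Rsp d)"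
  unfolding vnorm_def[abs_def] Rsp_def by measurable

definition vlipschitz :: "nat \<Rightarrow> real \<Rightarrow> ((nat \<Rightarrow> real) \<Rightarrow> real) \<Rightarrow> bool" where
  "vlipschitz d L f \<longleftrightarrow>
     (\<forall>y\<in>space (Rsp d). \<forall>z\<in>space (Rsp d). \<bar>f y - f z\<bar> \<le> L * vnorm d (\<lambda>i. y i - z i))"

lemma vlipschitz_vnorm: "vlipschitz d 1 (vnorm d)"
  by (simp add: vlipschitz_def vnorm_diff_le)

lemma vlipschitz_uminus: "vlipschitz d L f \<Longrightarrow> vlipschitz d L (\<lambda>x. - f x)"
  by (simp add: vlipschitz_def abs_minus_commute)

lemma vlipschitz_imp_locally_lipschitz: "vlipschitz d L f \<Longrightarrow> locally_lipschitz d f"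
  unfolding vlipschitz_def locally_lipschitz_def by (meson zero_less_one)

definition ramp :: "real \<Rightarrow> real \<Rightarrow> real \<Rightarrow> real" where
  "ramp t h v = min 1 (max 0 ((v - t) / h))"

lemma ramp_bounds: "0 \<le> ramp t h v" "ramp t h v \<le> 1"
  by (simp_all add: ramp_def)

lemma ramp_eq_0: "0 < h \<Longrightarrow> v \<le> t \<Longrightarrow> ramp t h v = 0"
  by (simp add: ramp_def divide_nonpos_pos)

lemma ramp_eq_1: "0 < h \<Longrightarrow> t + h \<le> v \<Longrightarrow> ramp t h v = 1"
  by (simp add: ramp_def le_divide_eq)

lemma vlipschitz_ramp:
  assumes "vlipschitz d 1 \<phi>" "0 < h"
  shows "vlipschitz d (1 / h) (\<lambda>x. ramp t h (\<phi> x))"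
  unfolding vlipschitz_def
proof (intro ballI)
  fix y z assume yz: "y \<in> space (Rsp d)" "z \<in> space (Rsp d)"
  have "\<bar>ramp t h (\<phi> y) - ramp t h (\<phi> z)\<bar> \<le> \<bar>(\<phi> y - t) / h - (\<phi> z - t) / h\<bar>"
    unfolding ramp_def by (simp add: min_def max_def abs_if)
  also have "\<dots> = \<bar>\<phi> y - \<phi> z\<bar> / h"
    using \<open>0 < h\<close> by (simp add: diff_divide_distrib[symmetric])
  also have "\<dots> \<le> 1 / h * vnorm d (\<lambda>i. y i - z i)"
    using assms yz by (simp add: vlipschitz_def divide_right_mono)
  finally show "\<bar>ramp t h (\<phi> y) - ramp t h (\<phi> z)\<bar> \<le> 1 / h * vnorm d (\<lambda>i. y i - z i)" .
qed

lemma grad_norm_le: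
  assumes "0 \<le> L"
    and "\<forall>\<^sub>F y in at x within space (Rsp d). \<bar>f y - f x\<bar> \<le> L * vnorm d (\<lambda>i. y i - x i)"
  shows "0 \<le> grad_norm d f x \<and> grad_norm d f x \<le> L"
proof -
  let ?F = "at x within space (Rsp d)"
  let ?q = "\<lambda>y. \<bar>f y - f x\<bar> / vnorm d (\<lambda>i. y i - x i)"
  show ?thesis
  proof (cases "?F = bot")
    case True
    then show ?thesis using assms(1) by (simp add: grad_norm_def bot_ereal_def)
  next
    case False
    have "ereal 0 \<le> Limsup ?F (\<lambda>y. ereal (?q y))"
      by (rule le_Limsup[OF False]) (simp add: vnorm_nonneg)
    moreover have "Limsup ?F (\<lambda>y. ereal (?q y)) \<le> ereal L"
    proof (rule Limsup_bounded)
      show "\<forall>\<^sub>F y in ?F. ereal (?q y) \<le> ereal L"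
        using assms(2)
      proof eventually_elim
        case (elim y)
        \<comment> \<open>where \<open>y\<close> agrees with \<open>x\<close> on \<open>{..<d}\<close> the quotient is \<open>0\<close> since \<open>v / 0 = 0\<close>\<close>
        then show ?case
          using assms(1) vnorm_nonneg[of d "\<lambda>i. y i - x i"]
          by (cases "vnorm d (\<lambda>i. y i - x i) = 0") (auto simp: divide_le_eq mult.commute)
      qed
    qed
    ultimately show ?thesis
      unfolding grad_norm_def by (cases "Limsup ?F (\<lambda>y. ereal (?q y))") auto
  qed
qed

lemma grad_norm_sq_le:
  assumes "vlipschitz d L f" "0 \<le> L" "x \<in> space (Rsp d)"
  shows "(grad_norm d f x)\<^sup>2 \<le> L\<^sup>2"
proof -
  have "\<forall>\<^sub>F y in at x within space (Rsp d). y \<in> space (Rsp d)"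
    by (simp add: eventually_at_filter)
  then have "\<forall>\<^sub>F y in at x within space (Rsp d). \<bar>f y - f x\<bar> \<le> L * vnorm d (\<lambda>i. y i - x i)"
    by eventually_elim (use assms in \<open>simp add: vlipschitz_def\<close>)
  then show ?thesis
    using grad_norm_le[OF assms(2)] by (simp add: power_mono)
qed

lemma grad_norm_ramp_eq_0:
  assumes \<phi>: "vlipschitz d 1 \<phi>" and h: "0 < h" and x: "x \<in> space (Rsp d)" "\<phi> x < t"
  shows "grad_norm d (\<lambda>y. ramp t h (\<phi> y)) x = 0"
proof -
  have "\<forall>\<^sub>F y in at x within space (Rsp d). vnorm d (\<lambda>i. y i - x i) < t - \<phi> x"
    using x(2) by (intro order_tendstoD(2)[OF tendsto_vnorm_diff]) simp
  moreover have "\<forall>\<^sub>F y in at x within space (Rsp d). y \<in> space (Rsp d)"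
    by (simp add: eventually_at_filter)
  ultimately have "\<forall>\<^sub>F y in at x within space (Rsp d).
      \<bar>ramp t h (\<phi> y) - ramp t h (\<phi> x)\<bar> \<le> 0 * vnorm d (\<lambda>i. y i - x i)"
  proof eventually_elim
    case (elim y)
    then have "\<phi> y \<le> t"
      using \<phi> x(1) unfolding vlipschitz_def by force
    then show ?case
      using x(2) h by (simp add: ramp_eq_0)
  qed
  then show ?thesis
    using grad_norm_le[of 0] by (simp add: order_antisym)
qed

section \<open>Concentration from a Poincare inequality\<close>

lemma isotropic_SUP_directional_moment_le_1:
  assumes "isotropic d \<mu>"
  shows "(SUP \<theta>\<in>vsphere d. \<integral>\<^sup>+x. ennreal ((vinner d x \<theta>)\<^sup>2) \<partial>\<mu>) \<le> 1"
proof (rule SUP_least)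
  fix \<theta> assume "\<theta> \<in> vsphere d"
  then have unit: "(\<Sum>i<d. (\<theta> i)\<^sup>2) = 1"
    unfolding vsphere_def vnorm_def by auto
  have int: "\<And>i j. i < d \<Longrightarrow> j < d \<Longrightarrow> integrable \<mu> (\<lambda>x. x i * x j)"
    and mom: "\<And>i j. i < d \<Longrightarrow> j < d \<Longrightarrow> (\<integral>x. x i * x j \<partial>\<mu>) = (if i = j then 1 else 0)"
    using assms unfolding isotropic_def by blast+
  have expand: "(vinner d x \<theta>)\<^sup>2 = (\<Sum>i<d. \<Sum>j<d. (\<theta> i * \<theta> j) * (x i * x j))" for x
    unfolding vinner_def power2_eq_square sum_product
    by (intro sum.cong refl) (simp add: algebra_simps)
  have integrable: "integrable \<mu> (\<lambda>x. (vinner d x \<theta>)\<^sup>2)"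
    unfolding expand by (intro Bochner_Integration.integrable_sum integrable_mult_right int) auto
  have "(\<integral>x. (vinner d x \<theta>)\<^sup>2 \<partial>\<mu>) = (\<Sum>i<d. \<Sum>j<d. (\<theta> i * \<theta> j) * (\<integral>x. x i * x j \<partial>\<mu>))"
    unfolding expand
    by (subst Bochner_Integration.integral_sum)
       (auto intro!: Bochner_Integration.integrable_sum integrable_mult_right int sum.cong
        simp: Bochner_Integration.integral_sum int)
  also have "\<dots> = 1"
    using unit by (simp add: mom power2_eq_square if_distrib sum.delta cong: if_cong)
  finally show "(\<integral>\<^sup>+x. ennreal ((vinner d x \<theta>)\<^sup>2) \<partial>\<mu>) \<le> 1"
    using nn_integral_eq_integral[OF integrable] by simp
qed

lemma isotropic_vnorm_sq:
  assumes "isotropic d \<mu>"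
  shows "integrable \<mu> (\<lambda>x. (vnorm d x)\<^sup>2)" "(\<integral>x. (vnorm d x)\<^sup>2 \<partial>\<mu>) = real d"
proof -
  have sq: "(vnorm d x)\<^sup>2 = (\<Sum>i<d. x i * x i)" for x
    unfolding vnorm_def by (simp add: sum_nonneg power2_eq_square)
  have int: "\<And>i j. i < d \<Longrightarrow> j < d \<Longrightarrow> integrable \<mu> (\<lambda>x. x i * x j)"
    and mom: "\<And>i j. i < d \<Longrightarrow> j < d \<Longrightarrow> (\<integral>x. x i * x j \<partial>\<mu>) = (if i = j then 1 else 0)"
    using assms unfolding isotropic_def by blast+
  show "integrable \<mu> (\<lambda>x. (vnorm d x)\<^sup>2)"
    unfolding sq by (intro Bochner_Integration.integrable_sum int) auto
  show "(\<integral>x. (vnorm d x)\<^sup>2 \<partial>\<mu>) = real d"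
    unfolding sq by (subst Bochner_Integration.integral_sum) (auto intro: int simp: mom)
qed

lemma mult_le_weighted_squares:
  fixes a b m :: real
  assumes "0 \<le> a" "0 \<le> b" "a + b \<le> 1"
  shows "a * b \<le> a * m\<^sup>2 + b * (1 - m)\<^sup>2"
proof -
  \<comment> \<open>\<open>(a + b) (a m\<^sup>2 + b (1 - m)\<^sup>2) - a b = ((a + b) m - b)\<^sup>2\<close>\<close>
  have "a * b * (a + b) \<le> (a + b) * (a * m\<^sup>2 + b * (1 - m)\<^sup>2)"
  proof -
    have "a * b * (a + b) \<le> a * b"
      using assms by (simp add: mult_left_le)
    also have "\<dots> \<le> (a + b) * (a * m\<^sup>2 + b * (1 - m)\<^sup>2)"
      using zero_le_power2[of "(a + b) * m - b"] by (simp add: power2_eq_square algebra_simps)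
    finally show ?thesis .
  qed
  then show ?thesis
  proof (cases "a + b = 0")
    case True
    then have "a = 0" "b = 0" using assms by linarith+
    then show ?thesis by simp
  qed (use assms in \<open>simp add: mult.commute\<close>)
qed

lemma (in prob_space) prob_mult_prob_le_variance:
  assumes f: "f \<in> borel_measurable M" "\<And>x. 0 \<le> f x" "\<And>x. f x \<le> 1"
    and A: "A \<in> events" "\<And>x. x \<in> A \<Longrightarrow> f x = 0"
    and B: "B \<in> events" "\<And>x. x \<in> B \<Longrightarrow> f x = 1"
  shows "prob A * prob B \<le> variance f"
proof -
  define m where "m = expectation f"
  have "0 \<le> m" "m \<le> 1"
    using f prob_space integral_mono[of M f "\<lambda>_. 1"]
    by (auto simp: m_def integral_nonneg_AE integrable_const_bound[where B=1])
  then have sq_le: "(f x - m)\<^sup>2 \<le> 1" for x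
    using f(2,3)[of x] by (simp add: abs_square_le_1)
  have disj: "A \<inter> B = {}"
    using A(2) B(2) by fastforce
  have "prob A * m\<^sup>2 + prob B * (1 - m)\<^sup>2 = (\<integral>x. indicator A x * m\<^sup>2 + indicator B x * (1 - m)\<^sup>2 \<partial>M)"
    using A(1) B(1) by (simp add: less_top[symmetric])
  also have "\<dots> \<le> variance f"
  proof (rule integral_mono)
    show "integrable M (\<lambda>x. (f x - expectation f)\<^sup>2)"
      by (rule integrable_const_bound[where B=1]) (use f sq_le in \<open>auto simp: m_def\<close>)
    show "indicator A x * m\<^sup>2 + indicator B x * (1 - m)\<^sup>2 \<le> (f x - expectation f)\<^sup>2" for x
      using A(2)[of x] B(2)[of x] disj by (auto simp: indicator_def m_def)
  qed (use A(1) B(1) in \<open>simp add: less_top[symmetric]\<close>)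
  finally have "prob A * m\<^sup>2 + prob B * (1 - m)\<^sup>2 \<le> variance f" .
  moreover have "prob A * prob B \<le> prob A * m\<^sup>2 + prob B * (1 - m)\<^sup>2"
    using finite_measure_Union[OF A(1) B(1) disj] prob_le_1[of "A \<union> B"]
    by (intro mult_le_weighted_squares) auto
  ultimately show ?thesis by linarith
qed

lemma exp_tail_of_geometric_tail:
  fixes P h u :: real
  assumes tail: "\<And>j::nat. (real j + 2) * h \<le> u \<Longrightarrow> P \<le> 2 * (1/2)^j"
    and "P \<le> 1" "0 < h" "0 \<le> u"
  shows "P \<le> 16 * exp (- (ln 2 / h) * u)"
proof -
  have half_pow: "(1/2::real)^m = exp (- ln 2 * real m)" for m
  proof -
    have "exp (- ln 2 * real m) = exp (- ln 2) ^ m"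
      by (simp add: mult.commute exp_of_nat_mult[symmetric])
    then show ?thesis by (simp add: exp_minus power_one_over)
  qed
  define n where "n = nat \<lfloor>u / h\<rfloor>"
  have n: "real n \<le> u / h" "u / h < real n + 1"
    using assms by (auto simp: n_def)
  show ?thesis
  proof (cases "2 \<le> n")
    case True
    then have "P \<le> 2 * (1/2)^(n - 2)"
      using tail[of "n - 2"] n(1) \<open>0 < h\<close> by (simp add: of_nat_diff le_divide_eq)
    also have "\<dots> = 8 * (1/2)^n"
    proof -
      obtain j where "n = j + 2" using True le_Suc_ex by (metis add.commute)
      then show ?thesis by (simp add: power_add)
    qed
    also have "\<dots> = 8 * exp (- ln 2 * real n)"
      by (simp add: half_pow)
    also have "\<dots> \<le> 8 * exp (- ln 2 * (u / h - 1))"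
      using n(2) by simp
    also have "\<dots> = 16 * exp (- (ln 2 / h) * u)"
      by (simp add: algebra_simps exp_add exp_diff exp_minus divide_inverse)
    finally show ?thesis .
  next
    case False
    then have "u / h < 2" using n by linarith
    then have "ln 2 * (u / h) \<le> ln 2 * 2"
      by (intro mult_left_mono) auto
    then have "(ln 2 / h) * u \<le> ln 2 * 2"
      by simp
    then have "exp (- ln 2 * 2) \<le> exp (- (ln 2 / h) * u)"
      by simp
    moreover have "exp (- ln 2 * 2) = (1/4::real)"
      using half_pow[of 2] by (simp add: power2_eq_square)
    ultimately show ?thesis using \<open>P \<le> 1\<close> by linarith
  qed
qed

locale poincare_space = prob_space \<mu> for \<mu> :: "(nat \<Rightarrow> real) measure" +
  fixes d :: nat and C :: real
  assumes sets_eq: "sets \<mu> = sets (Rsp d)"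
    and C_pos: "0 < C"
    and poincare_ineq: "\<And>f. locally_lipschitz d f \<Longrightarrow> integrable \<mu> (\<lambda>x. (f x)\<^sup>2) \<Longrightarrow>
       ennreal (\<integral>x. (f x - (\<integral>y. f y \<partial>\<mu>))\<^sup>2 \<partial>\<mu>)
         \<le> ennreal C * (\<integral>\<^sup>+x. ennreal ((grad_norm d f x)\<^sup>2) \<partial>\<mu>)"
begin

lemma space_eq: "space \<mu> = space (Rsp d)"
  using sets_eq_imp_space_eq[OF sets_eq] .

lemma measurable_from_Rsp: "f \<in> borel_measurable (Rsp d) \<Longrightarrow> f \<in> borel_measurable \<mu>"
  using measurable_cong_sets[OF sets_eq refl] by blast

lemma variance_le_of_lipschitz:
  assumes "vlipschitz d L f" "0 \<le> L" "integrable \<mu> (\<lambda>x. (f x)\<^sup>2)"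
  shows "variance f \<le> C * L\<^sup>2"
proof -
  have "ennreal (variance f) \<le> ennreal C * (\<integral>\<^sup>+x. ennreal ((grad_norm d f x)\<^sup>2) \<partial>\<mu>)"
    using poincare_ineq vlipschitz_imp_locally_lipschitz assms by blast
  also have "\<dots> \<le> ennreal C * (\<integral>\<^sup>+x. ennreal (L\<^sup>2) \<partial>\<mu>)"
    using grad_norm_sq_le[OF assms(1,2)] space_eq
    by (intro mult_left_mono nn_integral_mono ennreal_leI) auto
  also have "\<dots> = ennreal (C * L\<^sup>2)"
    using C_pos by (simp add: emeasure_space_1 ennreal_mult)
  finally show ?thesis
    using C_pos by simp
qed

text \<open>Poincare for the ramp from level \<open>t\<close> to \<open>t + h\<close>: its variance dominates
  \<open>P(\<phi> \<le> t) P(\<phi> \<ge> t + h)\<close>, and its gradient vanishes where \<open>\<phi> < t\<close>.\<close>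

lemma two_level_bound:
  assumes \<phi>: "vlipschitz d 1 \<phi>" "\<phi> \<in> borel_measurable (Rsp d)" and h: "0 < h"
  shows "prob {x\<in>space \<mu>. \<phi> x \<le> t} * prob {x\<in>space \<mu>. t + h \<le> \<phi> x}
           \<le> C / h\<^sup>2 * prob {x\<in>space \<mu>. t \<le> \<phi> x}"
proof -
  define f where "f x = ramp t h (\<phi> x)" for x
  define D where "D = {x\<in>space \<mu>. t \<le> \<phi> x}"
  have f_lip: "vlipschitz d (1 / h) f"
    unfolding f_def using vlipschitz_ramp[OF \<phi>(1) h] .
  have [measurable]: "\<phi> \<in> borel_measurable \<mu>"
    by (rule measurable_from_Rsp[OF \<phi>(2)])
  have f_meas[measurable]: "f \<in> borel_measurable \<mu>"
    unfolding f_def[abs_def] ramp_def by measurable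
  have f01: "0 \<le> f x" "f x \<le> 1" for x
    by (simp_all add: f_def ramp_bounds)
  have "(\<lambda>x. (f x)\<^sup>2) \<in> borel_measurable \<mu>"
    by measurable
  then have f_sq_int: "integrable \<mu> (\<lambda>x. (f x)\<^sup>2)"
    by (intro integrable_const_bound[where B=1]) (use f01 in \<open>auto simp: abs_square_le_1\<close>)
  have grad: "ennreal ((grad_norm d f x)\<^sup>2) \<le> ennreal (1 / h\<^sup>2) * indicator D x"
    if x: "x \<in> space \<mu>" for x
  proof (cases "t \<le> \<phi> x")
    case True
    then show ?thesis
      using grad_norm_sq_le[OF f_lip] h x space_eq by (simp add: D_def power_divide)
  next
    case False
    then have "grad_norm d f x = 0"
      unfolding f_def using grad_norm_ramp_eq_0[OF \<phi>(1) h] x space_eq by simp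
    then show ?thesis by simp
  qed
  have "ennreal (variance f) \<le> ennreal C * (\<integral>\<^sup>+x. ennreal ((grad_norm d f x)\<^sup>2) \<partial>\<mu>)"
    using poincare_ineq[OF vlipschitz_imp_locally_lipschitz[OF f_lip] f_sq_int] .
  also have "\<dots> \<le> ennreal C * (\<integral>\<^sup>+x. ennreal (1 / h\<^sup>2) * indicator D x \<partial>\<mu>)"
    by (intro mult_left_mono nn_integral_mono grad) auto
  also have "\<dots> = ennreal (C / h\<^sup>2 * prob D)"
    using C_pos by (simp add: D_def nn_integral_cmult_indicator emeasure_eq_measure ennreal_mult[symmetric])
  finally have "variance f \<le> C / h\<^sup>2 * prob D"
    using C_pos by simp
  moreover have "prob {x\<in>space \<mu>. \<phi> x \<le> t} * prob {x\<in>space \<mu>. t + h \<le> \<phi> x} \<le> variance f"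
    by (rule prob_mult_prob_le_variance[OF f_meas])
       (use h f01 in \<open>auto simp: f_def ramp_eq_0 ramp_eq_1\<close>)
  ultimately show ?thesis unfolding D_def by linarith
qed

lemma tail_halving:
  assumes \<phi>: "vlipschitz d 1 \<phi>" "\<phi> \<in> borel_measurable (Rsp d)"
    and half: "1/2 \<le> prob {x\<in>space \<mu>. \<phi> x \<le> t0}"
  shows "prob {x\<in>space \<mu>. t0 + real j * (2 * sqrt C) \<le> \<phi> x} \<le> (1/2)^j"
proof (induction j)
  case (Suc j)
  define h where "h = 2 * sqrt C"
  define t where "t = t0 + real j * h"
  have h: "0 < h" "C / h\<^sup>2 = 1/4"
    using C_pos by (simp_all add: h_def power_mult_distrib)
  have [measurable]: "\<phi> \<in> borel_measurable \<mu>"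
    by (rule measurable_from_Rsp[OF \<phi>(2)])
  have "0 \<le> real j * h"
    using h by simp
  then have "prob {x\<in>space \<mu>. \<phi> x \<le> t0} \<le> prob {x\<in>space \<mu>. \<phi> x \<le> t}"
    by (intro finite_measure_mono) (auto simp: t_def)
  then have "1/2 * prob {x\<in>space \<mu>. t + h \<le> \<phi> x}
      \<le> prob {x\<in>space \<mu>. \<phi> x \<le> t} * prob {x\<in>space \<mu>. t + h \<le> \<phi> x}"
    using half by (intro mult_right_mono) auto
  also have "\<dots> \<le> 1/4 * prob {x\<in>space \<mu>. t \<le> \<phi> x}"
    using two_level_bound[OF \<phi> h(1)] h(2) by simp
  also have "\<dots> \<le> 1/4 * (1/2)^j"
    using Suc.IH by (simp add: t_def h_def)
  finally show ?case
    by (simp add: t_def h_def algebra_simps)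
qed simp

lemma upper_deviation:
  assumes \<phi>: "vlipschitz d 1 \<phi>" "\<phi> \<in> borel_measurable (Rsp d)"
    and sq_int: "integrable \<mu> (\<lambda>x. (\<phi> x)\<^sup>2)"
  shows "prob {x\<in>space \<mu>. expectation \<phi> + (real j + 1) * (2 * sqrt C) \<le> \<phi> x} \<le> (1/2)^j"
proof -
  define h where "h = 2 * sqrt C"
  have h: "0 < h" "C / h\<^sup>2 = 1/4"
    using C_pos by (simp_all add: h_def power_mult_distrib)
  have [measurable]: "\<phi> \<in> borel_measurable \<mu>"
    by (rule measurable_from_Rsp[OF \<phi>(2)])
  have "prob {x\<in>space \<mu>. h \<le> \<bar>\<phi> x - expectation \<phi>\<bar>} \<le> variance \<phi> / h\<^sup>2"
    by (rule Chebyshev_inequality[OF _ sq_int h(1)]) simp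
  also have "\<dots> \<le> C / h\<^sup>2"
    using variance_le_of_lipschitz[OF \<phi>(1) _ sq_int] by (intro divide_right_mono) auto
  also have "\<dots> = 1/4"
    by (rule h(2))
  finally have "prob (space \<mu> - {x\<in>space \<mu>. \<phi> x \<le> expectation \<phi> + h}) \<le> 1/4"
    by (rule order_trans[rotated]) (intro finite_measure_mono; auto)
  then have "1/2 \<le> prob {x\<in>space \<mu>. \<phi> x \<le> expectation \<phi> + h}"
    by (simp add: prob_compl)
  from tail_halving[OF \<phi> this, of j] show ?thesis
    by (simp add: h_def algebra_simps)
qed

lemma lipschitz_deviation:
  assumes \<phi>: "vlipschitz d 1 \<phi>" "\<phi> \<in> borel_measurable (Rsp d)"
    and sq_int: "integrable \<mu> (\<lambda>x. (\<phi> x)\<^sup>2)"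
  shows "prob {x\<in>space \<mu>. (real j + 1) * (2 * sqrt C) \<le> \<bar>\<phi> x - expectation \<phi>\<bar>} \<le> 2 * (1/2)^j"
proof -
  let ?r = "(real j + 1) * (2 * sqrt C)"
  have [measurable]: "\<phi> \<in> borel_measurable \<mu>"
    by (rule measurable_from_Rsp[OF \<phi>(2)])
  have "prob {x\<in>space \<mu>. ?r \<le> \<bar>\<phi> x - expectation \<phi>\<bar>}
      \<le> prob ({x\<in>space \<mu>. expectation \<phi> + ?r \<le> \<phi> x}
              \<union> {x\<in>space \<mu>. expectation (\<lambda>x. - \<phi> x) + ?r \<le> - \<phi> x})"
    by (intro finite_measure_mono) (auto simp: abs_le_iff)
  also have "\<dots> \<le> prob {x\<in>space \<mu>. expectation \<phi> + ?r \<le> \<phi> x}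
                 + prob {x\<in>space \<mu>. expectation (\<lambda>x. - \<phi> x) + ?r \<le> - \<phi> x}"
    by (rule measure_Un_le) auto
  also have "\<dots> \<le> (1/2)^j + (1/2)^j"
    using upper_deviation[OF \<phi> sq_int] upper_deviation[of "\<lambda>x. - \<phi> x"] \<phi> sq_int
    by (intro add_mono) (auto simp: vlipschitz_uminus)
  finally show ?thesis by simp
qed

end

locale isotropic_poincare_space = poincare_space +
  assumes isotropic: "isotropic d \<mu>"
begin

lemma expectation_vnorm_bounds:
  shows "sqrt d - sqrt C \<le> expectation (vnorm d)" "expectation (vnorm d) \<le> sqrt d"
proof -
  define E where "E = expectation (vnorm d)"
  have [measurable]: "vnorm d \<in> borel_measurable \<mu>"
    by (rule measurable_from_Rsp[OF borel_measurable_vnorm])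
  note sq = isotropic_vnorm_sq[OF isotropic]
  have "integrable \<mu> (vnorm d)"
    by (rule square_integrable_imp_integrable[OF _ sq(1)]) measurable
  then have var: "variance (vnorm d) = real d - E\<^sup>2"
    using variance_eq[OF _ sq(1)] sq(2) by (simp add: E_def)
  have "0 \<le> E"
    unfolding E_def by (rule integral_nonneg_AE) (simp add: vnorm_nonneg)
  moreover have "E\<^sup>2 \<le> real d"
    using var variance_positive[of "vnorm d"] by linarith
  ultimately have "E \<le> sqrt d"
    using real_le_rsqrt by blast
  have "(sqrt d - E)\<^sup>2 \<le> (sqrt d - E) * (sqrt d + E)"
    using \<open>0 \<le> E\<close> \<open>E \<le> sqrt d\<close> by (simp add: power2_eq_square mult_left_mono)
  also have "\<dots> = real d - E\<^sup>2"
    by (simp add: algebra_simps power2_eq_square)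
  also have "\<dots> \<le> C"
    using variance_le_of_lipschitz[OF vlipschitz_vnorm _ sq(1)] var by simp
  finally have "sqrt d - E \<le> sqrt C"
    by (rule real_le_rsqrt)
  then show "sqrt d - sqrt C \<le> expectation (vnorm d)" "expectation (vnorm d) \<le> sqrt d"
    using \<open>E \<le> sqrt d\<close> by (simp_all add: E_def)
qed

lemma vnorm_deviation:
  assumes "0 \<le> u"
  shows "prob {x\<in>space \<mu>. u \<le> \<bar>vnorm d x - sqrt d\<bar>} \<le> 16 * exp (- (ln 2 / (2 * sqrt C)) * u)"
proof (rule exp_tail_of_geometric_tail)
  fix j :: nat assume j: "(real j + 2) * (2 * sqrt C) \<le> u"
  have [measurable]: "vnorm d \<in> borel_measurable \<mu>"
    by (rule measurable_from_Rsp[OF borel_measurable_vnorm])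
  have "prob {x\<in>space \<mu>. u \<le> \<bar>vnorm d x - sqrt d\<bar>}
      \<le> prob {x\<in>space \<mu>. (real j + 1) * (2 * sqrt C) \<le> \<bar>vnorm d x - expectation (vnorm d)\<bar>}"
    using j expectation_vnorm_bounds C_pos by (intro finite_measure_mono) (auto simp: algebra_simps)
  also have "\<dots> \<le> 2 * (1/2)^j"
    by (rule lipschitz_deviation[OF vlipschitz_vnorm borel_measurable_vnorm isotropic_vnorm_sq(1)[OF isotropic]])
  finally show "prob {x\<in>space \<mu>. u \<le> \<bar>vnorm d x - sqrt d\<bar>} \<le> 2 * (1/2)^j" .
qed (use assms C_pos in auto)

end

section \<open>Thin-shell concentration under the KLS conjecture\<close>

lemma KLS_conjecture_imp_isotropic_poincare_space:
  assumes "KLS_conjecture"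
  obtains C where "0 < C"
    and "\<And>d \<mu>. log_concave_measure d \<mu> \<Longrightarrow> isotropic d \<mu> \<Longrightarrow> isotropic_poincare_space \<mu> d C"
proof -
  from assms obtain C where C: "0 < C" and kls: "\<And>d \<mu> f.
      log_concave_measure d \<mu> \<and> centered d \<mu> \<and> locally_lipschitz d f \<and> integrable \<mu> (\<lambda>x. (f x)\<^sup>2) \<Longrightarrow>
      ennreal (\<integral>x. (f x - (\<integral>y. f y \<partial>\<mu>))\<^sup>2 \<partial>\<mu>)
        \<le> ennreal C * (SUP \<theta>\<in>vsphere d. \<integral>\<^sup>+x. ennreal ((vinner d x \<theta>)\<^sup>2) \<partial>\<mu>)
            * (\<integral>\<^sup>+x. ennreal ((grad_norm d f x)\<^sup>2) \<partial>\<mu>)"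
    unfolding KLS_conjecture_def by blast
  show thesis
  proof (rule that[OF C])
    fix d \<mu> assume lc: "log_concave_measure d \<mu>" and iso: "isotropic d \<mu>"
    show "isotropic_poincare_space \<mu> d C"
    proof (intro isotropic_poincare_space.intro poincare_space.intro poincare_space_axioms.intro
        isotropic_poincare_space_axioms.intro iso C)
      show "prob_space \<mu>" "sets \<mu> = sets (Rsp d)"
        using lc by (simp_all add: log_concave_measure_def)
      fix f assume f: "locally_lipschitz d f" "integrable \<mu> (\<lambda>x. (f x)\<^sup>2)"
      have "ennreal (\<integral>x. (f x - (\<integral>y. f y \<partial>\<mu>))\<^sup>2 \<partial>\<mu>)
          \<le> ennreal C * (SUP \<theta>\<in>vsphere d. \<integral>\<^sup>+x. ennreal ((vinner d x \<theta>)\<^sup>2) \<partial>\<mu>)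
              * (\<integral>\<^sup>+x. ennreal ((grad_norm d f x)\<^sup>2) \<partial>\<mu>)"
        using kls lc iso f unfolding isotropic_def by blast
      also have "\<dots> \<le> ennreal C * 1 * (\<integral>\<^sup>+x. ennreal ((grad_norm d f x)\<^sup>2) \<partial>\<mu>)"
        by (intro mult_right_mono mult_left_mono isotropic_SUP_directional_moment_le_1[OF iso]) auto
      finally show "ennreal (\<integral>x. (f x - (\<integral>y. f y \<partial>\<mu>))\<^sup>2 \<partial>\<mu>)
          \<le> ennreal C * (\<integral>\<^sup>+x. ennreal ((grad_norm d f x)\<^sup>2) \<partial>\<mu>)"
        by simp
    qed
  qed
qed

definition shell_concentration :: "(nat \<Rightarrow> 'a measure) \<Rightarrow> (nat \<Rightarrow> 'a \<Rightarrow> real) \<Rightarrow> (nat \<Rightarrow> real) \<Rightarrow> bool" where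
  "shell_concentration \<Omega> X r \<longleftrightarrow> (\<exists>K c. 0 < c \<and> (\<forall>n\<ge>1. \<forall>a>0.
     measure (\<Omega> n) {\<omega>\<in>space (\<Omega> n). a \<le> \<bar>X n \<omega> - 1\<bar>} \<le> K * exp (- (c * a * r n))))"

lemma KLS_conjecture_imp_shell_concentration:
  assumes "KLS_conjecture"
    and k: "\<forall>n\<ge>1. 1 \<le> k n"
    and prob: "\<forall>n\<ge>1. prob_space (\<Omega> n)"
    and meas: "\<forall>n\<ge>1. \<xi> n \<in> measurable (\<Omega> n) (Rsp (k n))"
    and iso: "\<forall>n\<ge>1. isotropic (k n) (distr (\<Omega> n) (Rsp (k n)) (\<xi> n))"
    and lc: "\<forall>n\<ge>1. log_concave_measure (k n) (distr (\<Omega> n) (Rsp (k n)) (\<xi> n))"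
  shows "shell_concentration \<Omega> (\<lambda>n \<omega>. vnorm (k n) (\<xi> n \<omega>) / sqrt (real (k n))) (\<lambda>n. sqrt (real (k n)))"
proof -
  obtain C where C: "0 < C" and P: "\<And>d \<mu>. log_concave_measure d \<mu> \<Longrightarrow> isotropic d \<mu> \<Longrightarrow>
      isotropic_poincare_space \<mu> d C"
    using KLS_conjecture_imp_isotropic_poincare_space[OF assms(1)] by blast
  define c where "c = ln 2 / (2 * sqrt C)"
  have tail: "measure (\<Omega> n) {\<omega>\<in>space (\<Omega> n). a \<le> \<bar>vnorm (k n) (\<xi> n \<omega>) / sqrt (real (k n)) - 1\<bar>}
      \<le> 16 * exp (- (c * a * sqrt (real (k n))))"
    if n: "1 \<le> n" and a: "0 < a" for n a
  proof -
    interpret isotropic_poincare_space "distr (\<Omega> n) (Rsp (k n)) (\<xi> n)" "k n" C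
      using P lc iso n by blast
    have [measurable]: "\<xi> n \<in> measurable (\<Omega> n) (Rsp (k n))"
      using meas n by blast
    have "1 \<le> k n"
      using k n by blast
    then have sk: "0 < sqrt (real (k n))"
      by simp
    have "{\<omega>\<in>space (\<Omega> n). a \<le> \<bar>vnorm (k n) (\<xi> n \<omega>) / sqrt (real (k n)) - 1\<bar>}
        = \<xi> n -` {x\<in>space (Rsp (k n)). a * sqrt (real (k n)) \<le> \<bar>vnorm (k n) x - sqrt (real (k n))\<bar>}
            \<inter> space (\<Omega> n)"
    proof -
      have iff: "a \<le> \<bar>v / sqrt (real (k n)) - 1\<bar> \<longleftrightarrow> a * sqrt (real (k n)) \<le> \<bar>v - sqrt (real (k n))\<bar>"
        for v
      proof -
        have "v / sqrt (real (k n)) - 1 = (v - sqrt (real (k n))) / sqrt (real (k n))"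
          using sk by (simp add: field_simps)
        then show ?thesis
          using sk by (simp add: abs_divide pos_le_divide_eq)
      qed
      have "\<xi> n \<omega> \<in> space (Rsp (k n))" if "\<omega> \<in> space (\<Omega> n)" for \<omega>
        using measurable_space[OF meas[rule_format, OF n] that] .
      then show ?thesis
        using iff by blast
    qed
    also have "measure (\<Omega> n) \<dots>
        = prob {x\<in>space (Rsp (k n)). a * sqrt (real (k n)) \<le> \<bar>vnorm (k n) x - sqrt (real (k n))\<bar>}"
      by (rule measure_distr[symmetric]) measurable
    also have "\<dots> \<le> 16 * exp (- c * (a * sqrt (real (k n))))"
      using vnorm_deviation[of "a * sqrt (real (k n))"] a sk by (simp add: c_def)
    finally show ?thesis
      by (simp add: mult.assoc)
  qed
  have "0 < c"
    using C by (simp add: c_def)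
  with tail show ?thesis
    unfolding shell_concentration_def by blast
qed

section \<open>Large deviations of the normalised norm\<close>

lemma elog_div_le:
  fixes s P K b :: real
  assumes "0 < s" "0 \<le> P" "P \<le> K * exp (- b)"
  shows "ereal (1 / s) * elog P \<le> ereal ((ln K - b) / s)"
proof (cases "P = 0")
  case False
  then have "0 < P"
    using assms by simp
  then have "0 < K"
    using assms(3) by (smt (verit) exp_gt_zero mult_nonpos_nonneg)
  then have "ln P \<le> ln K - b"
    using ln_mono[OF assms(3) \<open>0 < P\<close>] by (simp add: ln_mult)
  then show ?thesis
    using False assms(1) by (simp add: elog_def divide_right_mono)
qed (use assms in \<open>simp add: elog_def\<close>)

lemma LDP_D:
  assumes "LDP \<Omega> X s I"
  shows "\<forall>n\<ge>1. 0 < s n" "filterlim s at_top sequentially" "\<And>x. 0 \<le> I x"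
  using assms unfolding LDP_def by blast+

lemma LDP_lower_bound:
  assumes "LDP \<Omega> X s I" "A \<in> sets borel"
  shows "- (INF x\<in>interior A. I x)
           \<le> liminf (\<lambda>n. ereal (1 / s n) * elog (measure (\<Omega> n) {\<omega>\<in>space (\<Omega> n). X n \<omega> \<in> A}))"
  using assms unfolding LDP_def by (elim conjE) (drule bspec, assumption, erule conjunct1)

lemma LDP_upper_bound:
  assumes "LDP \<Omega> X s I" "A \<in> sets borel"
  shows "limsup (\<lambda>n. ereal (1 / s n) * elog (measure (\<Omega> n) {\<omega>\<in>space (\<Omega> n). X n \<omega> \<in> A}))
           \<le> - (INF x\<in>closure A. I x)"
  using assms unfolding LDP_def by (elim conjE) (drule bspec, assumption, erule conjunct2)

lemma LDP_rate_ge_of_tail: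
  assumes ldp: "LDP \<Omega> X s I" and A: "open A"
    and tail: "\<forall>n\<ge>1. measure (\<Omega> n) {\<omega>\<in>space (\<Omega> n). X n \<omega> \<in> A} \<le> K * exp (- b n)"
    and rate: "\<forall>\<^sub>F n in sequentially. \<beta> \<le> b n / s n"
  shows "ereal \<beta> \<le> (INF x\<in>A. I x)"
proof -
  define L where "L n = ereal (1 / s n) * elog (measure (\<Omega> n) {\<omega>\<in>space (\<Omega> n). X n \<omega> \<in> A})" for n
  have lower: "- (INF x\<in>A. I x) \<le> liminf L"
    using LDP_lower_bound[OF ldp borel_open[OF A]] by (simp add: L_def[abs_def] interior_open[OF A])
  have "\<forall>\<^sub>F n in sequentially. L n \<le> ereal (ln K / s n - \<beta>)"
    using eventually_ge_at_top[of 1] rate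
  proof eventually_elim
    case (elim n)
    then have "L n \<le> ereal ((ln K - b n) / s n)"
      unfolding L_def using LDP_D(1)[OF ldp] tail by (intro elog_div_le) auto
    also have "(ln K - b n) / s n \<le> ln K / s n - \<beta>"
      using elim by (simp add: diff_divide_distrib)
    finally show ?case by simp
  qed
  then have "liminf L \<le> liminf (\<lambda>n. ereal (ln K / s n - \<beta>))"
    by (rule Liminf_mono)
  also have "\<dots> = ereal (0 - \<beta>)"
  proof (rule lim_imp_Liminf)
    have "(\<lambda>n. ln K / s n - \<beta>) \<longlonglongrightarrow> 0 - \<beta>"
      by (intro tendsto_diff tendsto_const tendsto_divide_0[OF tendsto_const]
          filterlim_at_top_imp_at_infinity LDP_D(2)[OF ldp])
    then show "(\<lambda>n. ereal (ln K / s n - \<beta>)) \<longlonglongrightarrow> ereal (0 - \<beta>)"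
      by (rule tendsto_ereal)
  qed simp
  finally have "- (INF x\<in>A. I x) \<le> - ereal \<beta>"
    using lower by simp
  then show ?thesis
    by (simp only: ereal_minus_le_minus)
qed

lemma LDP_INF_rate_eq_0:
  assumes ldp: "LDP \<Omega> X s I" and prob: "\<forall>n\<ge>1. prob_space (\<Omega> n)"
  shows "(INF x. I x) = 0"
proof -
  define L where "L n = ereal (1 / s n) * elog (measure (\<Omega> n) {\<omega>\<in>space (\<Omega> n). X n \<omega> \<in> UNIV})" for n
  have upper: "limsup L \<le> - (INF x. I x)"
    using LDP_upper_bound[OF ldp, of UNIV] by (simp add: L_def[abs_def])
  have "\<forall>\<^sub>F n in sequentially. L n = 0"
    using eventually_ge_at_top[of 1]
  proof eventually_elim
    case (elim n)
    then interpret prob_space "\<Omega> n" using prob by simp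
    show ?case by (simp add: L_def prob_space elog_def)
  qed
  then have "limsup L = limsup (\<lambda>_. 0)"
    by (rule Limsup_eq)
  then have "limsup L = 0"
    by (simp add: Limsup_const)
  then have "(INF x. I x) \<le> 0"
    using upper by (simp add: ereal_uminus_le_reorder)
  then show ?thesis
    using LDP_D(3)[OF ldp] by (intro antisym INF_greatest)
qed

lemma shell_tail_mono:
  fixes \<Omega> :: "nat \<Rightarrow> 'a measure" and A :: "real set"
  assumes shell: "\<forall>n\<ge>1. \<forall>a>0.
      measure (\<Omega> n) {\<omega>\<in>space (\<Omega> n). a \<le> \<bar>X n \<omega> - 1\<bar>} \<le> K * exp (- (c * a * r n))"
    and prob: "\<forall>n\<ge>1. prob_space (\<Omega> n)" and meas: "\<forall>n\<ge>1. X n \<in> borel_measurable (\<Omega> n)"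
    and a: "0 < a" and A: "A \<subseteq> {y. a \<le> \<bar>y - 1\<bar>}"
  shows "\<forall>n\<ge>1. measure (\<Omega> n) {\<omega>\<in>space (\<Omega> n). X n \<omega> \<in> A} \<le> K * exp (- (c * a * r n))"
proof (intro allI impI)
  fix n :: nat assume n: "1 \<le> n"
  interpret prob_space "\<Omega> n" using prob n by simp
  have [measurable]: "X n \<in> borel_measurable (\<Omega> n)" using meas n by simp
  have "measure (\<Omega> n) {\<omega>\<in>space (\<Omega> n). X n \<omega> \<in> A}
      \<le> measure (\<Omega> n) {\<omega>\<in>space (\<Omega> n). a \<le> \<bar>X n \<omega> - 1\<bar>}"
    using A by (intro finite_measure_mono) auto
  also have "\<dots> \<le> K * exp (- (c * a * r n))"
    using shell a n by blast
  finally show "measure (\<Omega> n) {\<omega>\<in>space (\<Omega> n). X n \<omega> \<in> A} \<le> K * exp (- (c * a * r n))" .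
qed

lemma LDP_rate_degenerate:
  assumes shell: "shell_concentration \<Omega> X r"
    and prob: "\<forall>n\<ge>1. prob_space (\<Omega> n)" and meas: "\<forall>n\<ge>1. X n \<in> borel_measurable (\<Omega> n)"
    and ldp: "LDP \<Omega> X s I"
    and r_pos: "\<forall>n\<ge>1. 0 < r n" and slow: "(\<lambda>n. s n / r n) \<longlonglongrightarrow> 0"
  shows "I = (\<lambda>x. if x = 1 then 0 else \<infinity>)"
proof -
  obtain K c where c: "0 < c" and shell_bound: "\<forall>n\<ge>1. \<forall>a>0.
      measure (\<Omega> n) {\<omega>\<in>space (\<Omega> n). a \<le> \<bar>X n \<omega> - 1\<bar>} \<le> K * exp (- (c * a * r n))"
    using shell unfolding shell_concentration_def by blast
  note tail = shell_tail_mono[OF shell_bound prob meas]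
  have "\<forall>\<^sub>F n in sequentially. 0 < s n / r n"
    using eventually_ge_at_top[of 1]
  proof eventually_elim
    case (elim n)
    then show ?case
      using LDP_D(1)[OF ldp] r_pos by simp
  qed
  from filterlim_inverse_at_top[OF slow this]
  have fast: "filterlim (\<lambda>n. r n / s n) at_top sequentially"
    by simp
  have I_inf: "I x = \<infinity>" if "x \<noteq> 1" for x
  proof (rule ereal_top)
    fix \<beta> :: real
    define a where "a = \<bar>x - 1\<bar> / 2"
    have a: "0 < a" "a < \<bar>x - 1\<bar>"
      using that by (auto simp: a_def)
    have "filterlim (\<lambda>n. c * a * (r n / s n)) at_top sequentially"
      by (rule filterlim_tendsto_pos_mult_at_top[OF tendsto_const _ fast]) (use c a in simp)
    from this[unfolded filterlim_at_top, rule_format, of \<beta>]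
    have rate: "\<forall>\<^sub>F n in sequentially. \<beta> \<le> c * a * r n / s n"
      by simp
    have "open {y. a < \<bar>y - 1\<bar>}"
      by (intro open_Collect_less continuous_intros)
    moreover have "{y. a < \<bar>y - 1\<bar>} \<subseteq> {y. a \<le> \<bar>y - 1\<bar>}"
      by auto
    ultimately have "ereal \<beta> \<le> (INF y\<in>{y. a < \<bar>y - 1\<bar>}. I y)"
      using LDP_rate_ge_of_tail[OF ldp _ tail[OF a(1)] rate] by blast
    also have "\<dots> \<le> I x"
      using a(2) by (intro INF_lower) simp
    finally show "ereal \<beta> \<le> I x" .
  qed
  have "I 1 \<le> I x" for x
    using I_inf[of x] by (cases "x = 1") simp_all
  then have "I 1 \<le> (INF x. I x)"
    by (rule INF_greatest)
  then have "I 1 = 0"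
    using LDP_INF_rate_eq_0[OF ldp prob] LDP_D(3)[OF ldp, of 1] by simp
  then show ?thesis
    using I_inf by (simp add: fun_eq_iff)
qed

lemma LDP_rate_linear_growth:
  assumes shell: "shell_concentration \<Omega> X r"
    and prob: "\<forall>n\<ge>1. prob_space (\<Omega> n)" and meas: "\<forall>n\<ge>1. X n \<in> borel_measurable (\<Omega> n)"
    and ldp: "LDP \<Omega> X s I"
    and C: "0 < C" "\<forall>n\<ge>1. s n \<le> C * r n" and t0: "1 < t0"
  shows "0 < (INF t\<in>{t0<..}. (INF x\<in>{t<..}. I x) / ereal t)"
proof -
  obtain K c where c: "0 < c" and shell_bound: "\<forall>n\<ge>1. \<forall>a>0.
      measure (\<Omega> n) {\<omega>\<in>space (\<Omega> n). a \<le> \<bar>X n \<omega> - 1\<bar>} \<le> K * exp (- (c * a * r n))"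
    using shell unfolding shell_concentration_def by blast
  note tail = shell_tail_mono[OF shell_bound prob meas]
  have bound: "ereal (c * (t - 1) / C) \<le> (INF x\<in>{t<..}. I x)" if t: "1 < t" for t
  proof (rule LDP_rate_ge_of_tail[OF ldp open_greaterThan, where b="\<lambda>n. c * (t - 1) * r n"])
    show "\<forall>n\<ge>1. measure (\<Omega> n) {\<omega>\<in>space (\<Omega> n). X n \<omega> \<in> {t<..}} \<le> K * exp (- (c * (t - 1) * r n))"
      using t by (intro tail) auto
    show "\<forall>\<^sub>F n in sequentially. c * (t - 1) / C \<le> c * (t - 1) * r n / s n"
      using eventually_ge_at_top[of 1]
    proof eventually_elim
      case (elim n)
      have "0 < s n" "s n \<le> C * r n"
        using elim C(2) LDP_D(1)[OF ldp] by auto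
      then have "1 / C \<le> r n / s n"
        using C(1) by (simp add: field_simps)
      then have "c * (t - 1) * (1 / C) \<le> c * (t - 1) * (r n / s n)"
        using c t by (intro mult_left_mono) auto
      then show ?case by simp
    qed
  qed
  define \<rho> where "\<rho> = c * (t0 - 1) / C / t0"
  have "0 < \<rho>"
    using c C t0 by (simp add: \<rho>_def)
  also have "ereal \<rho> \<le> (INF t\<in>{t0<..}. (INF x\<in>{t<..}. I x) / ereal t)"
  proof (rule INF_greatest)
    fix t assume "t \<in> {t0<..}"
    then have t: "t0 < t" "1 < t"
      using t0 by auto
    have "(t0 - 1) / t0 \<le> (t - 1) / t"
      using t t0 by (simp add: field_simps)
    then have "c / C * ((t0 - 1) / t0) \<le> c / C * ((t - 1) / t)"
      using c C by (intro mult_left_mono) auto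
    then have "ereal \<rho> \<le> ereal (c * (t - 1) / C) / ereal t"
      using t by (simp add: \<rho>_def)
    also have "\<dots> \<le> (INF x\<in>{t<..}. I x) / ereal t"
      using bound[OF t(2)] t by (intro ereal_divide_right_mono) auto
    finally show "ereal \<rho> \<le> (INF x\<in>{t<..}. I x) / ereal t" .
  qed
  finally show ?thesis
    by (simp add: zero_ereal_def)
qed

theorem mainTheorem2:
  fixes k :: "nat \<Rightarrow> nat"
    and \<Omega> :: "nat \<Rightarrow> 'a measure"
    and \<xi> :: "nat \<Rightarrow> 'a \<Rightarrow> (nat \<Rightarrow> real)"
    and s :: "nat \<Rightarrow> real"
    and I :: "real \<Rightarrow> ereal"
  assumes KLS: "KLS_conjecture"
    and k_range: "\<forall>n\<ge>1. 1 \<le> k n \<and> k n \<le> n"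
    and k_lim: "filterlim k at_top sequentially"
    and prob: "\<forall>n\<ge>1. prob_space (\<Omega> n)"
    and meas: "\<forall>n\<ge>1. \<xi> n \<in> measurable (\<Omega> n) (Rsp (k n))"
    and iso: "\<forall>n\<ge>1. isotropic (k n) (distr (\<Omega> n) (Rsp (k n)) (\<xi> n))"
    and lc: "\<forall>n\<ge>1. log_concave_measure (k n) (distr (\<Omega> n) (Rsp (k n)) (\<xi> n))"
    and ldp: "LDP \<Omega> (\<lambda>n \<omega>. vnorm (k n) (\<xi> n \<omega>) / sqrt (real (k n))) s I"
  shows "\<not> (((\<lambda>n. s n / sqrt (real (k n))) \<longlonglongrightarrow> 0) \<and>
              I \<noteq> (\<lambda>x. if x = 1 then 0 else \<infinity>))
       \<and> \<not> ((\<exists>c C. 0 < c \<and> c \<le> C \<and>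
                 (\<forall>n\<ge>1. c * sqrt (real (k n)) \<le> s n \<and> s n \<le> C * sqrt (real (k n)))) \<and>
            (\<exists>t0>1. (INF t\<in>{t0<..}. (INF x\<in>{t<..}. I x) / ereal t) = 0))"
proof -
  define X where "X = (\<lambda>n \<omega>. vnorm (k n) (\<xi> n \<omega>) / sqrt (real (k n)))"
  have shell: "shell_concentration \<Omega> X (\<lambda>n. sqrt (real (k n)))"
    unfolding X_def using k_range by (intro KLS_conjecture_imp_shell_concentration[OF KLS _ prob meas iso lc]) simp
  have X_meas: "\<forall>n\<ge>1. X n \<in> borel_measurable (\<Omega> n)"
  proof (intro allI impI)
    fix n :: nat assume "1 \<le> n"
    then have [measurable]: "\<xi> n \<in> measurable (\<Omega> n) (Rsp (k n))"
      using meas by blast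
    show "X n \<in> borel_measurable (\<Omega> n)"
      unfolding X_def by measurable
  qed
  have sqrt_k_pos: "\<forall>n\<ge>1. 0 < sqrt (real (k n))"
    using k_range by (simp add: Suc_le_eq)
  have ldp_X: "LDP \<Omega> X s I"
    using ldp unfolding X_def .
  note degenerate = LDP_rate_degenerate[OF shell prob X_meas ldp_X sqrt_k_pos]
  note linear = LDP_rate_linear_growth[OF shell prob X_meas ldp_X]
  show ?thesis
  proof (intro conjI notI)
    assume "((\<lambda>n. s n / sqrt (real (k n))) \<longlonglongrightarrow> 0) \<and> I \<noteq> (\<lambda>x. if x = 1 then 0 else \<infinity>)"
    then show False
      by (elim conjE) (drule degenerate, contradiction)
  next
    assume "(\<exists>c C. 0 < c \<and> c \<le> C \<and>
                 (\<forall>n\<ge>1. c * sqrt (real (k n)) \<le> s n \<and> s n \<le> C * sqrt (real (k n)))) \<and>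
            (\<exists>t0>1. (INF t\<in>{t0<..}. (INF x\<in>{t<..}. I x) / ereal t) = 0)"
    then obtain c C t0 where "0 < c" "c \<le> C" and s_le: "\<forall>n\<ge>1. s n \<le> C * sqrt (real (k n))"
      and "1 < t0" and rate_0: "(INF t\<in>{t0<..}. (INF x\<in>{t<..}. I x) / ereal t) = 0"
      by meson
    have "0 < C"
      using \<open>0 < c\<close> \<open>c \<le> C\<close> by linarith
    from linear[OF this s_le \<open>1 < t0\<close>] show False
      by (simp add: rate_0)
  qed
qed

end
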